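(* Let $\nu>0$, $\beta$ a constant, $K$ a smooth positive function with antiderivative $J(u)=\int K(u)\,du$ assumed invertible, and $C(u)=\beta K(u)$. For arbitrary constants $c_1,c_2$ define, for $z>0$, $t>0$, $$v(z,t)=\begin{cases} t^{-(1+\nu)/2}\exp\!\left(-\frac{\beta z^2}{4t}\right)\left(c_1+c_2\frac{(z/t)^{1-\nu}}{1-\nu}\right), & \nu\neq 1,\\[4pt] t^{-1}\exp\!\left(-\frac{\beta z^2}{4t}\right)\left(c_1+c_2\ln\frac{z}{t}\right), & \nu=1.\end{cases}$$ Then $v$ solves $\beta v_t=v_{zz}+\frac{\nu}{z}v_z$, and, wherever $v$ takes values in the range of $J$, $u(z,t)=J^{-1}(v(z,t))$ solves $C(u)u_t=z^{-\nu}\left(K(u)z^{\nu}u_z\right)_z$. *)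

theory Defs
  imports "HOL-Analysis.Analysis"
begin

definition vsol :: "real \<Rightarrow> real \<Rightarrow> real \<Rightarrow> real \<Rightarrow> real \<Rightarrow> real \<Rightarrow> real" where
  "vsol \<nu> \<beta> c1 c2 z t =
     (if \<nu> \<noteq> 1 then
        t powr (-(1 + \<nu>) / 2) * exp (- (\<beta> * z\<^sup>2) / (4 * t)) *
          (c1 + c2 * (z / t) powr (1 - \<nu>) / (1 - \<nu>))
      else
        t powr (-1) * exp (- (\<beta> * z\<^sup>2) / (4 * t)) * (c1 + c2 * ln (z / t)))"

end

theory Submission
  imports Defs "HOL-Complex_Analysis.Conformal_Mappings"
begin

(*
  With L v = v_zz + (nu/z) v_z - beta v_t, the Gaussian monomials W p q = z^p t^q exp(-beta z^2/(4t))
  satisfy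
    L (W p q) = W p q * (p (p - 1 + nu) / z^2 - beta (p + q + (1 + nu)/2) / t),
  so W 0 a and W (1 - nu) b, with a = -(1 + nu)/2 and b = a - (1 - nu), solve L v = 0, and for
  nu <> 1 the function v is a linear combination of them. For nu = 1 the two powers of z coincide,
  and the second solution is W 0 (-1) * (ln z - ln t).
  Since J' = K, the inverse function rule gives K(u) u_t = v_t and K(u) u_z = v_z, hence
    z^-nu (K(u) z^nu u_z)_z = z^-nu (z^nu v_z)_z = v_zz + (nu/z) v_z = beta v_t = beta K(u) u_t.
*)

definition radial_heat_solution :: "real \<Rightarrow> real \<Rightarrow> (real \<Rightarrow> real \<Rightarrow> real) \<Rightarrow> bool" where
  "radial_heat_solution \<nu> \<beta> v \<longleftrightarrow> (\<exists>vt vz vzz. \<forall>z>0. \<forall>t>0.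
     ((\<lambda>s. v z s) has_real_derivative vt z t) (at t) \<and>
     ((\<lambda>w. v w t) has_real_derivative vz z t) (at z) \<and>
     ((\<lambda>w. vz w t) has_real_derivative vzz z t) (at z) \<and>
     \<beta> * vt z t = vzz z t + \<nu> / z * vz z t)"

lemma radial_heat_solutionE:
  assumes "radial_heat_solution \<nu> \<beta> v"
  obtains vt vz vzz where
    "\<And>z t. z > 0 \<Longrightarrow> t > 0 \<Longrightarrow> ((\<lambda>s. v z s) has_real_derivative vt z t) (at t)"
    "\<And>z t. z > 0 \<Longrightarrow> t > 0 \<Longrightarrow> ((\<lambda>w. v w t) has_real_derivative vz z t) (at z)"
    "\<And>z t. z > 0 \<Longrightarrow> t > 0 \<Longrightarrow> ((\<lambda>w. vz w t) has_real_derivative vzz z t) (at z)"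
    "\<And>z t. z > 0 \<Longrightarrow> t > 0 \<Longrightarrow> \<beta> * vt z t = vzz z t + \<nu> / z * vz z t"
  using assms unfolding radial_heat_solution_def by blast

lemma radial_heat_solution_lincomb:
  assumes "radial_heat_solution \<nu> \<beta> v" and "radial_heat_solution \<nu> \<beta> w"
  shows "radial_heat_solution \<nu> \<beta> (\<lambda>z t. c * v z t + d * w z t)"
proof -
  obtain vt vz vzz where v:
    "\<And>z t. z > 0 \<Longrightarrow> t > 0 \<Longrightarrow> ((\<lambda>s. v z s) has_real_derivative vt z t) (at t)"
    "\<And>z t. z > 0 \<Longrightarrow> t > 0 \<Longrightarrow> ((\<lambda>y. v y t) has_real_derivative vz z t) (at z)"
    "\<And>z t. z > 0 \<Longrightarrow> t > 0 \<Longrightarrow> ((\<lambda>y. vz y t) has_real_derivative vzz z t) (at z)"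
    "\<And>z t. z > 0 \<Longrightarrow> t > 0 \<Longrightarrow> \<beta> * vt z t = vzz z t + \<nu> / z * vz z t"
    using assms(1) by (elim radial_heat_solutionE) blast
  obtain wt wz wzz where w:
    "\<And>z t. z > 0 \<Longrightarrow> t > 0 \<Longrightarrow> ((\<lambda>s. w z s) has_real_derivative wt z t) (at t)"
    "\<And>z t. z > 0 \<Longrightarrow> t > 0 \<Longrightarrow> ((\<lambda>y. w y t) has_real_derivative wz z t) (at z)"
    "\<And>z t. z > 0 \<Longrightarrow> t > 0 \<Longrightarrow> ((\<lambda>y. wz y t) has_real_derivative wzz z t) (at z)"
    "\<And>z t. z > 0 \<Longrightarrow> t > 0 \<Longrightarrow> \<beta> * wt z t = wzz z t + \<nu> / z * wz z t"
    using assms(2) by (elim radial_heat_solutionE) blast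
  show ?thesis
    unfolding radial_heat_solution_def
  proof (intro exI allI impI conjI)
    fix z t :: real
    assume "z > 0" "t > 0"
    show "((\<lambda>s. c * v z s + d * w z s) has_real_derivative c * vt z t + d * wt z t) (at t)"
      "((\<lambda>y. c * v y t + d * w y t) has_real_derivative c * vz z t + d * wz z t) (at z)"
      "((\<lambda>y. c * vz y t + d * wz y t) has_real_derivative c * vzz z t + d * wzz z t) (at z)"
      using \<open>z > 0\<close> \<open>t > 0\<close> by (auto intro!: DERIV_add DERIV_cmult v w)
    have "\<beta> * (c * vt z t + d * wt z t) = c * (\<beta> * vt z t) + d * (\<beta> * wt z t)"
      by (simp add: algebra_simps)
    also have "\<dots> = c * (vzz z t + \<nu> / z * vz z t) + d * (wzz z t + \<nu> / z * wz z t)"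
      using v(4) w(4) \<open>z > 0\<close> \<open>t > 0\<close> by simp
    finally show "\<beta> * (c * vt z t + d * wt z t) =
        c * vzz z t + d * wzz z t + \<nu> / z * (c * vz z t + d * wz z t)"
      by (simp add: algebra_simps)
  qed
qed

lemma radial_heat_solution_cong:
  assumes "radial_heat_solution \<nu> \<beta> v"
    and "\<And>z t. z > 0 \<Longrightarrow> t > 0 \<Longrightarrow> v z t = w z t"
  shows "radial_heat_solution \<nu> \<beta> w"
proof -
  obtain vt vz vzz where v:
    "\<And>z t. z > 0 \<Longrightarrow> t > 0 \<Longrightarrow> ((\<lambda>s. v z s) has_real_derivative vt z t) (at t)"
    "\<And>z t. z > 0 \<Longrightarrow> t > 0 \<Longrightarrow> ((\<lambda>y. v y t) has_real_derivative vz z t) (at z)"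
    "\<And>z t. z > 0 \<Longrightarrow> t > 0 \<Longrightarrow> ((\<lambda>y. vz y t) has_real_derivative vzz z t) (at z)"
    "\<And>z t. z > 0 \<Longrightarrow> t > 0 \<Longrightarrow> \<beta> * vt z t = vzz z t + \<nu> / z * vz z t"
    using assms(1) by (elim radial_heat_solutionE) blast
  show ?thesis
    unfolding radial_heat_solution_def
  proof (intro exI allI impI conjI)
    fix z t :: real
    assume z: "z > 0" and t: "t > 0"
    show "((\<lambda>s. w z s) has_real_derivative vt z t) (at t)"
      by (rule has_field_derivative_transform_within_open[OF v(1)[OF z t], of "{0<..}"])
        (use assms(2) z t in auto)
    show "((\<lambda>y. w y t) has_real_derivative vz z t) (at z)"
      by (rule has_field_derivative_transform_within_open[OF v(2)[OF z t], of "{0<..}"])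
        (use assms(2) z t in auto)
  qed (use v in auto)
qed

definition gauss_monomial :: "real \<Rightarrow> real \<Rightarrow> real \<Rightarrow> real \<Rightarrow> real \<Rightarrow> real" where
  "gauss_monomial \<beta> p q z t = z powr p * t powr q * exp (- (\<beta> * z\<^sup>2) / (4 * t))"

lemma gauss_monomial_deriv_t:
  assumes "z > 0" "t > 0"
  shows "((\<lambda>s. gauss_monomial \<beta> p q z s) has_real_derivative
      gauss_monomial \<beta> p q z t * (q / t + \<beta> * z\<^sup>2 / (4 * t\<^sup>2))) (at t)"
proof -
  have "((\<lambda>s. gauss_monomial \<beta> p q z s) has_real_derivative
     z powr p * (q * t powr (q - 1) * exp (- (\<beta> * z\<^sup>2) / (4 * t)) +
      t powr q * (exp (- (\<beta> * z\<^sup>2) / (4 * t)) * ((\<beta> * z\<^sup>2) * 4 / (4 * t)\<^sup>2)))) (at t)"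
    unfolding gauss_monomial_def using assms
    by (auto intro!: derivative_eq_intros simp: power2_eq_square field_simps)
  moreover have "t powr (q - 1) = t powr q / t"
    using assms by (simp add: powr_diff)
  ultimately show ?thesis
    using assms unfolding gauss_monomial_def by (simp add: field_simps power2_eq_square)
qed

lemma gauss_monomial_deriv_z:
  assumes "z > 0" "t > 0"
  shows "((\<lambda>w. gauss_monomial \<beta> p q w t) has_real_derivative
      gauss_monomial \<beta> p q z t * (p / z - \<beta> * z / (2 * t))) (at z)"
proof -
  have "((\<lambda>w. gauss_monomial \<beta> p q w t) has_real_derivative
     (p * z powr (p - 1) * exp (- (\<beta> * z\<^sup>2) / (4 * t)) +
      z powr p * (exp (- (\<beta> * z\<^sup>2) / (4 * t)) * (- (\<beta> * (2 * z)) / (4 * t)))) * t powr q) (at z)"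
    unfolding gauss_monomial_def using assms
    by (auto intro!: derivative_eq_intros simp: power2_eq_square field_simps)
  moreover have "z powr (p - 1) = z powr p / z"
    using assms by (simp add: powr_diff)
  ultimately show ?thesis
    using assms unfolding gauss_monomial_def by (simp add: field_simps power2_eq_square)
qed

lemma gauss_monomial_deriv_zz:
  assumes "z > 0" "t > 0"
  shows "((\<lambda>w. gauss_monomial \<beta> p q w t * (p / w - \<beta> * w / (2 * t))) has_real_derivative
      gauss_monomial \<beta> p q z t * ((p / z - \<beta> * z / (2 * t))\<^sup>2 - p / z\<^sup>2 - \<beta> / (2 * t))) (at z)"
proof -
  have "((\<lambda>w. p / w - \<beta> * w / (2 * t)) has_real_derivative - p / z\<^sup>2 - \<beta> / (2 * t)) (at z)"
    using assms by (auto intro!: derivative_eq_intros simp: power2_eq_square field_simps)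
  from DERIV_mult[OF gauss_monomial_deriv_z[OF assms] this] show ?thesis
    by (rule DERIV_cong) (simp add: field_simps power2_eq_square)
qed

lemma radial_heat_solution_gauss_monomial:
  assumes "p * (p - 1 + \<nu>) = 0" and "p + q + (1 + \<nu>) / 2 = 0"
  shows "radial_heat_solution \<nu> \<beta> (gauss_monomial \<beta> p q)"
  unfolding radial_heat_solution_def
proof (intro exI allI impI conjI)
  fix z t :: real
  assume z: "z > 0" and t: "t > 0"
  let ?W = "gauss_monomial \<beta> p q z t"
  show "((\<lambda>s. gauss_monomial \<beta> p q z s) has_real_derivative
      ?W * (q / t + \<beta> * z\<^sup>2 / (4 * t\<^sup>2))) (at t)"
    using z t by (rule gauss_monomial_deriv_t)
  show "((\<lambda>w. gauss_monomial \<beta> p q w t) has_real_derivative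
      ?W * (p / z - \<beta> * z / (2 * t))) (at z)"
    using z t by (rule gauss_monomial_deriv_z)
  show "((\<lambda>w. gauss_monomial \<beta> p q w t * (p / w - \<beta> * w / (2 * t))) has_real_derivative
      ?W * ((p / z - \<beta> * z / (2 * t))\<^sup>2 - p / z\<^sup>2 - \<beta> / (2 * t))) (at z)"
    using z t by (rule gauss_monomial_deriv_zz)
  let ?A = "q / t + \<beta> * z\<^sup>2 / (4 * t\<^sup>2)"
  let ?B = "(p / z - \<beta> * z / (2 * t))\<^sup>2 - p / z\<^sup>2 - \<beta> / (2 * t)"
  let ?C = "p / z - \<beta> * z / (2 * t)"
  have "?B + \<nu> / z * ?C - \<beta> * ?A = p * (p - 1 + \<nu>) / z\<^sup>2 - \<beta> * (p + q + (1 + \<nu>) / 2) / t"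
    using z t by (simp add: field_simps power2_eq_square)
  then have "\<beta> * ?A = ?B + \<nu> / z * ?C"
    using assms by simp
  then show "\<beta> * (?W * ?A) = ?W * ?B + \<nu> / z * (?W * ?C)"
    by (metis distrib_left mult.left_commute)
qed

lemma radial_heat_solution_gauss_log:
  "radial_heat_solution 1 \<beta> (\<lambda>z t. gauss_monomial \<beta> 0 (-1) z t * (ln z - ln t))"
  unfolding radial_heat_solution_def
proof (intro exI allI impI conjI)
  fix z t :: real
  assume z: "z > 0" and t: "t > 0"
  let ?W = "gauss_monomial \<beta> 0 (-1)"
  let ?L = "ln z - ln t"
  have Wt: "((\<lambda>s. ?W z s) has_real_derivative ?W z t * (\<beta> * z\<^sup>2 / (4 * t\<^sup>2) - 1 / t)) (at t)"
    using gauss_monomial_deriv_t[OF z t, of \<beta> 0 "-1"] by simp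
  have Wz: "((\<lambda>w. ?W w t) has_real_derivative - ?W z t * (\<beta> * z / (2 * t))) (at z)"
    using gauss_monomial_deriv_z[OF z t, of \<beta> 0 "-1"] by simp
  have Wzz: "((\<lambda>w. - ?W w t * (\<beta> * w / (2 * t))) has_real_derivative
      ?W z t * ((\<beta> * z / (2 * t))\<^sup>2 - \<beta> / (2 * t))) (at z)"
    using gauss_monomial_deriv_zz[OF z t, of \<beta> 0 "-1"] by simp
  have Lt: "((\<lambda>s. ln z - ln s) has_real_derivative - 1 / t) (at t)"
    using t by (auto intro!: derivative_eq_intros)
  have Lz: "((\<lambda>w. ln w - ln t) has_real_derivative 1 / z) (at z)"
    using z by (auto intro!: derivative_eq_intros)
  have Iz: "((\<lambda>w. 1 / w) has_real_derivative - 1 / z\<^sup>2) (at z)"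
    using z by (auto intro!: derivative_eq_intros simp: power2_eq_square)
  show "((\<lambda>s. ?W z s * (ln z - ln s)) has_real_derivative
      ?W z t * (\<beta> * z\<^sup>2 / (4 * t\<^sup>2) - 1 / t) * ?L + - 1 / t * ?W z t) (at t)"
    using DERIV_mult[OF Wt Lt] .
  show "((\<lambda>w. ?W w t * (ln w - ln t)) has_real_derivative
      - ?W z t * (\<beta> * z / (2 * t)) * ?L + 1 / z * ?W z t) (at z)"
    using DERIV_mult[OF Wz Lz] .
  show "((\<lambda>w. - ?W w t * (\<beta> * w / (2 * t)) * (ln w - ln t) + 1 / w * ?W w t) has_real_derivative
      (?W z t * ((\<beta> * z / (2 * t))\<^sup>2 - \<beta> / (2 * t)) * ?L + 1 / z * (- ?W z t * (\<beta> * z / (2 * t))))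
      + (- 1 / z\<^sup>2 * ?W z t + - ?W z t * (\<beta> * z / (2 * t)) * (1 / z))) (at z)"
    using DERIV_add[OF DERIV_mult[OF Wzz Lz] DERIV_mult[OF Iz Wz]] .
  show "\<beta> * (?W z t * (\<beta> * z\<^sup>2 / (4 * t\<^sup>2) - 1 / t) * ?L + - 1 / t * ?W z t) =
      (?W z t * ((\<beta> * z / (2 * t))\<^sup>2 - \<beta> / (2 * t)) * ?L + 1 / z * (- ?W z t * (\<beta> * z / (2 * t))))
      + (- 1 / z\<^sup>2 * ?W z t + - ?W z t * (\<beta> * z / (2 * t)) * (1 / z))
      + 1 / z * (- ?W z t * (\<beta> * z / (2 * t)) * ?L + 1 / z * ?W z t)"
    using z t by (simp add: field_simps power2_eq_square)
qed

lemma radial_heat_solution_vsol: "radial_heat_solution \<nu> \<beta> (vsol \<nu> \<beta> c1 c2)"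
proof (cases "\<nu> = 1")
  case True
  let ?W = "gauss_monomial \<beta> 0 (-1)"
  have "radial_heat_solution 1 \<beta> (\<lambda>z t. c1 * ?W z t + c2 * (?W z t * (ln z - ln t)))"
    by (intro radial_heat_solution_lincomb radial_heat_solution_gauss_monomial
        radial_heat_solution_gauss_log) simp_all
  then show ?thesis
    unfolding True
    by (rule radial_heat_solution_cong) (simp add: vsol_def gauss_monomial_def ln_div field_simps)
next
  case False
  define a where "a = - (1 + \<nu>) / 2"
  define b where "b = a - (1 - \<nu>)"
  have "radial_heat_solution \<nu> \<beta>
      (\<lambda>z t. c1 * gauss_monomial \<beta> 0 a z t + c2 / (1 - \<nu>) * gauss_monomial \<beta> (1 - \<nu>) b z t)"
    by (intro radial_heat_solution_lincomb radial_heat_solution_gauss_monomial)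
      (simp_all add: a_def b_def field_simps)
  then show ?thesis
  proof (rule radial_heat_solution_cong)
    fix z t :: real
    assume z: "z > 0" and t: "t > 0"
    have "(z / t) powr (1 - \<nu>) * t powr a = z powr (1 - \<nu>) * t powr b"
      using z t by (simp add: b_def powr_divide powr_diff mult.commute)
    then show "c1 * gauss_monomial \<beta> 0 a z t + c2 / (1 - \<nu>) * gauss_monomial \<beta> (1 - \<nu>) b z t =
        vsol \<nu> \<beta> c1 c2 z t"
      using False z unfolding vsol_def gauss_monomial_def a_def[symmetric]
      by (simp add: field_simps)
  qed
qed

lemma radial_heat_solution_deriv:
  assumes "radial_heat_solution \<nu> \<beta> v" and z: "z > 0" and t: "t > 0"
  shows "(\<lambda>s. v z s) differentiable (at t) \<and>
    (\<forall>\<^sub>F y in nhds z. (\<lambda>w. v w t) differentiable (at y)) \<and>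
    (\<lambda>y. deriv (\<lambda>w. v w t) y) differentiable (at z) \<and>
    \<beta> * deriv (\<lambda>s. v z s) t = deriv (\<lambda>y. deriv (\<lambda>w. v w t) y) z + \<nu> / z * deriv (\<lambda>w. v w t) z"
proof -
  obtain vt vz vzz where v:
    "\<And>z t. z > 0 \<Longrightarrow> t > 0 \<Longrightarrow> ((\<lambda>s. v z s) has_real_derivative vt z t) (at t)"
    "\<And>z t. z > 0 \<Longrightarrow> t > 0 \<Longrightarrow> ((\<lambda>w. v w t) has_real_derivative vz z t) (at z)"
    "\<And>z t. z > 0 \<Longrightarrow> t > 0 \<Longrightarrow> ((\<lambda>w. vz w t) has_real_derivative vzz z t) (at z)"
    "\<And>z t. z > 0 \<Longrightarrow> t > 0 \<Longrightarrow> \<beta> * vt z t = vzz z t + \<nu> / z * vz z t"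
    using assms(1) by (elim radial_heat_solutionE) blast
  have pos_near: "\<forall>\<^sub>F y in nhds z. y > 0"
    using eventually_nhds_in_open[of "{0<..}" z] z by simp
  have vzz: "((\<lambda>y. deriv (\<lambda>w. v w t) y) has_real_derivative vzz z t) (at z)"
    by (rule has_field_derivative_transform_within_open[OF v(3)[OF z t], of "{0<..}"])
      (use z t v(2) in \<open>auto intro: DERIV_imp_deriv[symmetric]\<close>)
  show ?thesis
  proof (intro conjI)
    show "(\<lambda>s. v z s) differentiable (at t)"
      using v(1)[OF z t] real_differentiable_def by blast
    show "\<forall>\<^sub>F y in nhds z. (\<lambda>w. v w t) differentiable (at y)"
      using pos_near by eventually_elim (use v(2) t real_differentiable_def in blast)
    show "(\<lambda>y. deriv (\<lambda>w. v w t) y) differentiable (at z)"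
      using vzz real_differentiable_def by blast
    show "\<beta> * deriv (\<lambda>s. v z s) t = deriv (\<lambda>y. deriv (\<lambda>w. v w t) y) z + \<nu> / z * deriv (\<lambda>w. v w t) z"
      using DERIV_imp_deriv[OF vzz] DERIV_imp_deriv[OF v(2)[OF z t]] DERIV_imp_deriv[OF v(1)[OF z t]] v(4)[OF z t]
      by simp
  qed
qed

lemma has_real_derivative_inv_antiderivative:
  assumes J: "\<And>x. (J has_real_derivative K x) (at x)"
    and K: "\<And>x. K x \<noteq> 0" and "inj J" and "y \<in> range J"
  shows "(inv J has_real_derivative inverse (K (inv J y))) (at y)"
proof -
  obtain x where y: "y = J x"
    using \<open>y \<in> range J\<close> by blast
  have "continuous_on UNIV J"
    using J by (meson DERIV_isCont continuous_at_imp_continuous_on)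
  then have "(inv J has_real_derivative inverse (K x)) (at (J x))"
    by (intro has_field_derivative_inverse_strong[where S=UNIV] J K) (simp_all add: \<open>inj J\<close>)
  then show ?thesis
    using y \<open>inj J\<close> by simp
qed

lemma radial_heat_solution_nonlinear_diffusion:
  assumes "radial_heat_solution \<nu> \<beta> v"
    and J: "\<And>x. (J has_real_derivative K x) (at x)"
    and K: "\<And>x. K x \<noteq> 0" and "inj J"
    and z: "z > 0" and t: "t > 0" and "v z t \<in> range J"
  defines "u \<equiv> \<lambda>z t. inv J (v z t)"
  shows "(\<lambda>s. u z s) differentiable (at t) \<and>
    (\<forall>\<^sub>F y in nhds z. (\<lambda>w. u w t) differentiable (at y)) \<and>
    (\<lambda>y. K (u y t) * y powr \<nu> * deriv (\<lambda>w. u w t) y) differentiable (at z) \<and>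
    (\<beta> * K (u z t)) * deriv (\<lambda>s. u z s) t =
      z powr (-\<nu>) * deriv (\<lambda>y. K (u y t) * y powr \<nu> * deriv (\<lambda>w. u w t) y) z"
proof -
  obtain vt vz vzz where v:
    "\<And>z t. z > 0 \<Longrightarrow> t > 0 \<Longrightarrow> ((\<lambda>s. v z s) has_real_derivative vt z t) (at t)"
    "\<And>z t. z > 0 \<Longrightarrow> t > 0 \<Longrightarrow> ((\<lambda>w. v w t) has_real_derivative vz z t) (at z)"
    "\<And>z t. z > 0 \<Longrightarrow> t > 0 \<Longrightarrow> ((\<lambda>w. vz w t) has_real_derivative vzz z t) (at z)"
    "\<And>z t. z > 0 \<Longrightarrow> t > 0 \<Longrightarrow> \<beta> * vt z t = vzz z t + \<nu> / z * vz z t"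
    using assms(1) by (elim radial_heat_solutionE) blast
  note inv_J = has_real_derivative_inv_antiderivative[OF J K \<open>inj J\<close>]
  have "open (range J)"
    by (rule invariance_of_domain)
      (use J \<open>inj J\<close> in \<open>auto intro: DERIV_isCont continuous_at_imp_continuous_on\<close>)
  moreover have "((\<lambda>w. v w t) \<longlongrightarrow> v z t) (nhds z)"
    using DERIV_isCont[OF v(2)[OF z t]] tendsto_at_iff_tendsto_nhds[of "\<lambda>w. v w t" z]
    by (simp add: isCont_def)
  ultimately have "\<forall>\<^sub>F y in nhds z. v y t \<in> range J"
    using \<open>v z t \<in> range J\<close> topological_tendstoD by blast
  moreover have "\<forall>\<^sub>F y in nhds z. y > 0"
    using eventually_nhds_in_open[of "{0<..}" z] z by simp
  ultimately have near: "\<forall>\<^sub>F y in nhds z. y > 0 \<and> v y t \<in> range J"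
    by eventually_elim simp
  have uz: "((\<lambda>w. u w t) has_real_derivative inverse (K (u y t)) * vz y t) (at y)"
    if "y > 0" "v y t \<in> range J" for y
    unfolding u_def using DERIV_chain2[OF inv_J[OF that(2)] v(2)[OF that(1) t]] .
  have ut: "((\<lambda>s. u z s) has_real_derivative inverse (K (u z t)) * vt z t) (at t)"
    unfolding u_def using DERIV_chain2[OF inv_J[OF \<open>v z t \<in> range J\<close>] v(1)[OF z t]] .
  have flux_eq: "\<forall>\<^sub>F y in nhds z. K (u y t) * y powr \<nu> * deriv (\<lambda>w. u w t) y = y powr \<nu> * vz y t"
    using near by eventually_elim (use DERIV_imp_deriv[OF uz] K in simp)
  have "((\<lambda>y. y powr \<nu> * vz y t) has_real_derivative
      \<nu> * z powr (\<nu> - 1) * vz z t + z powr \<nu> * vzz z t) (at z)"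
    using z by (auto intro!: derivative_eq_intros v(3)[OF z t])
  then have flux: "((\<lambda>y. K (u y t) * y powr \<nu> * deriv (\<lambda>w. u w t) y) has_real_derivative
      \<nu> * z powr (\<nu> - 1) * vz z t + z powr \<nu> * vzz z t) (at z)"
    using DERIV_cong_ev[OF refl flux_eq refl] by blast
  show ?thesis
  proof (intro conjI)
    show "(\<lambda>s. u z s) differentiable (at t)"
      using ut real_differentiable_def by blast
    show "\<forall>\<^sub>F y in nhds z. (\<lambda>w. u w t) differentiable (at y)"
      using near by eventually_elim (use uz real_differentiable_def in blast)
    show "(\<lambda>y. K (u y t) * y powr \<nu> * deriv (\<lambda>w. u w t) y) differentiable (at z)"
      using flux real_differentiable_def by blast
    have "(\<beta> * K (u z t)) * deriv (\<lambda>s. u z s) t = \<beta> * vt z t"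
      using DERIV_imp_deriv[OF ut] K[of "u z t"] by simp
    also have "\<dots> = vzz z t + \<nu> / z * vz z t"
      using z t by (rule v(4))
    also have "\<dots> = z powr (-\<nu>) * (\<nu> * z powr (\<nu> - 1) * vz z t + z powr \<nu> * vzz z t)"
      using z by (simp add: powr_diff powr_minus field_simps)
    also have "\<dots> = z powr (-\<nu>) * deriv (\<lambda>y. K (u y t) * y powr \<nu> * deriv (\<lambda>w. u w t) y) z"
      using DERIV_imp_deriv[OF flux] by simp
    finally show "(\<beta> * K (u z t)) * deriv (\<lambda>s. u z s) t =
        z powr (-\<nu>) * deriv (\<lambda>y. K (u y t) * y powr \<nu> * deriv (\<lambda>w. u w t) y) z" .
  qed
qed

theorem mainTheorem9:
  fixes \<nu> \<beta> c1 c2 :: real and K J :: "real \<Rightarrow> real"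
  assumes nu_pos: "\<nu> > 0"
    and K_smooth: "\<forall>n x. (deriv ^^ n) K differentiable (at x)"
    and K_pos: "\<forall>x. K x > 0"
    and J_antideriv: "\<forall>x. (J has_real_derivative K x) (at x)"
    and J_inj: "inj J"
  defines "v \<equiv> vsol \<nu> \<beta> c1 c2"
    and "u \<equiv> (\<lambda>z t. inv J (vsol \<nu> \<beta> c1 c2 z t))"
  shows
    "(\<forall>z>0. \<forall>t>0.
        (\<lambda>s. v z s) differentiable (at t) \<and>
        (\<forall>\<^sub>F y in nhds z. (\<lambda>w. v w t) differentiable (at y)) \<and>
        (\<lambda>y. deriv (\<lambda>w. v w t) y) differentiable (at z) \<and>
        \<beta> * deriv (\<lambda>s. v z s) t =
          deriv (\<lambda>y. deriv (\<lambda>w. v w t) y) z + \<nu> / z * deriv (\<lambda>w. v w t) z)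
     \<and>
     (\<forall>z>0. \<forall>t>0. v z t \<in> range J \<longrightarrow>
        (\<lambda>s. u z s) differentiable (at t) \<and>
        (\<forall>\<^sub>F y in nhds z. (\<lambda>w. u w t) differentiable (at y)) \<and>
        (\<lambda>y. K (u y t) * y powr \<nu> * deriv (\<lambda>w. u w t) y) differentiable (at z) \<and>
        (\<beta> * K (u z t)) * deriv (\<lambda>s. u z s) t =
          z powr (-\<nu>) * deriv (\<lambda>y. K (u y t) * y powr \<nu> * deriv (\<lambda>w. u w t) y) z)"
proof -
  have sol: "radial_heat_solution \<nu> \<beta> (vsol \<nu> \<beta> c1 c2)"
    by (rule radial_heat_solution_vsol)
  have K_nonzero: "\<And>x. K x \<noteq> 0"
    using K_pos by (metis less_irrefl)
  show ?thesis
    unfolding v_def u_def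
    by (rule conjI; intro allI impI)
      (fact radial_heat_solution_deriv[OF sol],
       fact radial_heat_solution_nonlinear_diffusion[OF sol J_antideriv[rule_format] K_nonzero J_inj])
qed

end
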